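(* Let $N, s \in \mathbb{N}$ with $\gcd(N, s) = 1$, and let $s'$ be the unique integer in $[1,N-1]$ with $s s'\equiv 1 \pmod N$. Let $H<P$ be natural numbers, and suppose $p_0 = sx_0 + 1$ (with $x_0$ an integer) is a divisor of $N$ lying in the interval $[P-H, P+H]$. Let $\tilde{P}$ be the unique integer in $[0,s-1]$ with $\tilde P\equiv P \pmod s$, and define $g(x) \in \mathbb{Z}[x]$ by $g(x) = x + c$, where $c$ is the unique integer in $[0,N-1]$ congruent to $s' + s'(P - \tilde{P})$ modulo $N$. Let $x' = x_0 - \frac{P - \tilde{P}}{s}$. Then: (1) $x'$ is an integer and $p_0 \mid g(x')$; (2) $|x'| \le H/s+1$. *)

theory Defs
  imports Complex_Main "HOL-Computational_Algebra.Polynomial" "HOL-Number_Theory.Cong"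
begin

end

theory Submission
  imports Defs
begin

text \<open>Write \<open>P - Pt = s m\<close>. Modulo \<open>p\<^sub>0 = s x\<^sub>0 + 1\<close>, which divides \<open>N\<close>, the
  inverse \<open>s'\<close> of \<open>s\<close> gives \<open>x\<^sub>0 \<equiv> s' s x\<^sub>0 \<equiv> -s'\<close> and \<open>c \<equiv> s'(1 + s m) \<equiv> s' + m\<close>,
  hence \<open>g(x') = x\<^sub>0 - m + c \<equiv> 0\<close>. For the bound, \<open>s x' = p\<^sub>0 - 1 - (P - Pt)\<close> with
  \<open>|p\<^sub>0 - P| \<le> H\<close> and \<open>0 \<le> Pt < s\<close>.\<close>

lemma dvd_shifted_root_of_linear_cong:
  fixes p s s' x0 m c :: int
  assumes inv: "[s * s' = 1] (mod p)"
    and p_dvd: "p dvd s * x0 + 1"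
    and c_cong: "[c = s' * (1 + s * m)] (mod p)"
  shows "p dvd x0 - m + c"
proof -
  have x0_red: "[x0 = (s * s') * x0] (mod p)"
    using cong_scalar_right[OF cong_sym[OF inv], of x0] by simp
  have "[c = s' + (s * s') * m] (mod p)"
    using c_cong by (simp add: algebra_simps)
  also have "[s' + (s * s') * m = s' + m] (mod p)"
    using cong_add[OF cong_refl cong_scalar_right[OF inv, of m]] by simp
  finally have c_red: "[c = s' + m] (mod p)" .
  have "[x0 - m + c = (s * s') * x0 - m + (s' + m)] (mod p)"
    using x0_red c_red by (intro cong_add cong_diff cong_refl)
  also have "(s * s') * x0 - m + (s' + m) = s' * (s * x0 + 1)"
    by (simp add: algebra_simps)
  also have "[s' * (s * x0 + 1) = 0] (mod p)"
    using p_dvd by (simp add: cong_0_iff)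
  finally show ?thesis
    by (simp add: cong_0_iff)
qed

lemma abs_le_divide_plus_one:
  fixes s y H :: real
  assumes "0 < s" and "\<bar>s * y\<bar> \<le> H + s"
  shows "\<bar>y\<bar> \<le> H / s + 1"
proof -
  have "s * \<bar>y\<bar> \<le> H + s"
    using assms by (simp add: abs_mult)
  then show ?thesis
    using \<open>0 < s\<close> by (simp add: field_simps)
qed

theorem claim3p3:
  fixes N s H P :: nat and s' x0 p0 Pt c :: int and g :: "int poly" and x' :: real
  assumes cop: "gcd N s = 1"
    and s'_rng: "1 \<le> s' \<and> s' \<le> int N - 1" and s'_inv: "[int s * s' = 1] (mod int N)"
    and HP: "H < P"
    and p0_def: "p0 = int s * x0 + 1"
    and p0_dvd: "p0 dvd int N"
    and p0_rng: "int P - int H \<le> p0 \<and> p0 \<le> int P + int H"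
    and Pt_rng: "0 \<le> Pt \<and> Pt \<le> int s - 1" and Pt_cong: "[Pt = int P] (mod int s)"
    and c_rng: "0 \<le> c \<and> c \<le> int N - 1"
    and c_cong: "[c = s' + s' * (int P - Pt)] (mod int N)"
    and g_def: "g = [:c, 1:]"
    and x'_def: "x' = real_of_int x0 - real_of_int (int P - Pt) / real s"
  shows "(\<exists>k::int. real_of_int k = x' \<and> p0 dvd poly g k) \<and> \<bar>x'\<bar> \<le> real H / real s + 1"
proof -
  \<comment> \<open>\<open>s > 0\<close> follows from the range of \<open>Pt\<close>.\<close>
  have s_pos: "s > 0"
    using Pt_rng by linarith
  have "int s dvd int P - Pt"
    using cong_sym[OF Pt_cong] by (simp add: cong_iff_dvd_diff)
  then obtain m where m: "int P - Pt = int s * m" ..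
  have x'_int: "x' = real_of_int (x0 - m)"
    using x'_def m s_pos by simp
  have c_cong': "[c = s' * (1 + int s * m)] (mod int N)"
    using c_cong by (simp add: m distrib_left)
  have "p0 dvd x0 - m + c"
    by (rule dvd_shifted_root_of_linear_cong[OF cong_dvd_modulus[OF s'_inv p0_dvd] _
          cong_dvd_modulus[OF c_cong' p0_dvd]]) (simp add: p0_def)
  then have root: "p0 dvd poly g (x0 - m)"
    by (simp add: g_def add.commute)
  have "int s * (x0 - m) = p0 - 1 - (int P - Pt)"
    using m p0_def by (simp add: algebra_simps)
  then have "\<bar>int s * (x0 - m)\<bar> \<le> int H + int s"
    using p0_rng Pt_rng by linarith
  then have "real_of_int \<bar>int s * (x0 - m)\<bar> \<le> real_of_int (int H + int s)"
    by (simp only: of_int_le_iff)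
  then have "\<bar>real s * real_of_int (x0 - m)\<bar> \<le> real H + real s"
    by simp
  then have bound: "\<bar>x'\<bar> \<le> real H / real s + 1"
    using s_pos x'_int by (intro abs_le_divide_plus_one) auto
  show ?thesis
    using root bound x'_int by blast
qed

end
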